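(* Fix $0<p<1$ and set $N=p/(1-p)$. With all operators on $\mathcal H_j$ transported to the Fock space via $W_j$ (i.e. $X\mapsto W_jXW_j^*$), the following hold as $j\to\infty$ through the half-integers: (1) $\rho_{j,p}\to\rho_{0,N}$ in trace norm; (2) for every fixed $z\in\mathbb{C}$, $|j,\tfrac{z}{\sqrt{2j}})(j,\tfrac{z}{\sqrt{2j}}|\to|z)(z|$ in trace norm; (3) $\mathrm{Tr}\,\rho_{j,p}(a-\tfrac{1}{\sqrt{2j}}J_{j,+})^*(a-\tfrac{1}{\sqrt{2j}}J_{j,+})\to0$ and $\mathrm{Tr}\,\rho_{j,p}(a^*-\tfrac{1}{\sqrt{2j}}J_{j,-})^*(a^*-\tfrac{1}{\sqrt{2j}}J_{j,-})\to0$; (4) $\mathrm{Tr}\,\rho_{j,p}(Q-\tfrac1{\sqrt j}J_{j,1})^2\to0$ and $\mathrm{Tr}\,\rho_{j,p}(P-\tfrac1{\sqrt j}J_{j,2})^2\to0$; (5) $\mathrm{Tr}\,\rho_{j,p}Q^2\to\mathrm{Tr}\,\rho_{0,N}Q^2$, $\mathrm{Tr}\,\rho_{j,p}P^2\to\mathrm{Tr}\,\rho_{0,N}P^2$, $\mathrm{Tr}\,\rho_{j,p}(Q\circ P)\to\mathrm{Tr}\,\rho_{0,N}(Q\circ P)$; (6) $\mathrm{Tr}\,\rho_{j,p}\big((Q-\tfrac1{\sqrt j}J_{j,1})\circ Y\big)\to0$ and $\mathrm{Tr}\,\rho_{j,p}\big((P-\tfrac1{\sqrt j}J_{j,2})\circ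 Y\big)\to0$ for $Y\in\{Q,P\}$.
   Context: For a half-integer $j\ge0$, $\mathcal H_j$ is the spin-$j$ representation space of $\mathfrak{su}(2)$ with orthonormal basis $|j,m\rangle$, $m=j,j-1,\dots,-j$, and generators $J_{j,1},J_{j,2},J_{j,3}$ with $J_{j,3}|j,m\rangle=m|j,m\rangle$, $J_{j,\pm}=J_{j,1}\pm iJ_{j,2}$, $J_{j,+}|j,m\rangle=\sqrt{(j-m)(j+m+1)}|j,m+1\rangle$, $J_{j,-}|j,m\rangle=\sqrt{(j-m+1)(j+m)}|j,m-1\rangle$. Fock space: $\ell^2$ with number basis $|n\rangle$, $n\ge0$; $a|n\rangle=\sqrt n|n-1\rangle$, $Q=(a+a^* )/\sqrt2$, $P=(a-a^* )/(i\sqrt2)$, $X\circ Y=(XY+YX)/2$. The isometry $W_j:\mathcal H_j\to\ell^2$ is $W_j|j,m\rangle=|j-m\rangle$. Coherent vector: $|z)=e^{-|z|^2/2}\sum_{n\ge0}\frac{z^n}{\sqrt{n!}}|n\rangle$. Thermal state: $\rho_{0,N}=\frac1{N+1}\sum_{n\ge0}(\frac{N}{N+1})^n|n\rangle\langle n|$. Spin state: $\rho_{j,p}=\frac{1-p}{1-p^{2j+1}}\sum_{m=-j}^jp^{j-m}|j,m\rangle\langle j,m|$. Spin coherent vector for $|z|\le1$: $|j,z)=\sum_{m=-j}^j\sqrt{\binom{2j}{j+m}}\,z^{j-m}(1-|z|^2)^{(j+m)/2}|j,m\rangle$. *)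

theory Defs
  imports "HOL-Analysis.Analysis"
begin

text \<open>Operators on the Fock space l^2 are represented by their matrices in the
number basis |n>, as functions nat => nat => complex (row, column).
The spin-j space H_j is indexed by d = 2j (a natural number); j = d/2.
Operators on H_j are given by matrix elements X m' m = <j,m'|X|j,m>, with m, m'
real numbers in {-j,..,j}; vectors on H_j are functions of m.\<close>

type_synonym fmat = "nat \<Rightarrow> nat \<Rightarrow> complex"

definition mmul :: "fmat \<Rightarrow> fmat \<Rightarrow> fmat" where
  "mmul X Y = (\<lambda>m n. \<Sum>\<^sub>\<infinity>k. X m k * Y k n)"

definition adj :: "fmat \<Rightarrow> fmat" where
  "adj X = (\<lambda>m n. cnj (X n m))"

definition madd :: "fmat \<Rightarrow> fmat \<Rightarrow> fmat" where
  "madd X Y = (\<lambda>m n. X m n + Y m n)"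

definition msub :: "fmat \<Rightarrow> fmat \<Rightarrow> fmat" where
  "msub X Y = (\<lambda>m n. X m n - Y m n)"

definition smul :: "complex \<Rightarrow> fmat \<Rightarrow> fmat" where
  "smul c X = (\<lambda>m n. c * X m n)"

definition jordan :: "fmat \<Rightarrow> fmat \<Rightarrow> fmat" where
  "jordan X Y = (\<lambda>m n. (mmul X Y m n + mmul Y X m n) / 2)"

definition Tr :: "fmat \<Rightarrow> complex" where
  "Tr X = (\<Sum>\<^sub>\<infinity>n. X n n)"

text \<open>For bounded operators this is
the trace norm Tr|T| (possibly infinity).\<close>
definition orthonormal_fin :: "nat \<Rightarrow> nat \<Rightarrow> (nat \<Rightarrow> nat \<Rightarrow> complex) \<Rightarrow> bool" where
  "orthonormal_fin M K e \<longleftrightarrow>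
     (\<forall>k<K. \<forall>l<K. (\<Sum>n<M. cnj (e k n) * e l n) = (if k = l then 1 else 0))"

definition trace_norm :: "fmat \<Rightarrow> ereal" where
  "trace_norm T = (SUP (M, K, e, f) \<in> {(M, K, e, f). orthonormal_fin M K e \<and> orthonormal_fin M K f}.
      ereal (\<Sum>k<K. cmod (\<Sum>m<M. \<Sum>n<M. cnj (f k m) * T m n * e k n)))"

definition ann :: fmat where
  "ann = (\<lambda>m n. if n = m + 1 then complex_of_real (sqrt (real n)) else 0)"

definition cre :: fmat where
  "cre = adj ann"

definition Qop :: fmat where
  "Qop = smul (1 / complex_of_real (sqrt 2)) (madd ann cre)"

definition Pop :: fmat where
  "Pop = smul (1 / (\<i> * complex_of_real (sqrt 2))) (msub ann cre)"

definition proj :: "(nat \<Rightarrow> complex) \<Rightarrow> fmat" where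
  "proj v = (\<lambda>r c. v r * cnj (v c))"

definition coh :: "complex \<Rightarrow> nat \<Rightarrow> complex" where
  "coh z n = complex_of_real (exp (- (cmod z)\<^sup>2 / 2)) * z ^ n / complex_of_real (sqrt (fact n))"

definition rho_th :: "real \<Rightarrow> fmat" where
  "rho_th N = (\<lambda>r c. if r = c then complex_of_real (1 / (N + 1) * (N / (N + 1)) ^ r) else 0)"

definition Jplus :: "nat \<Rightarrow> real \<Rightarrow> real \<Rightarrow> complex" where
  "Jplus d m' m = (let j = real d / 2 in
     if m' = m + 1 then complex_of_real (sqrt ((j - m) * (j + m + 1))) else 0)"

definition Jminus :: "nat \<Rightarrow> real \<Rightarrow> real \<Rightarrow> complex" where
  "Jminus d m' m = (let j = real d / 2 in
     if m' = m - 1 then complex_of_real (sqrt ((j - m + 1) * (j + m))) else 0)"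

definition J1 :: "nat \<Rightarrow> real \<Rightarrow> real \<Rightarrow> complex" where
  "J1 d m' m = (Jplus d m' m + Jminus d m' m) / 2"

definition J2 :: "nat \<Rightarrow> real \<Rightarrow> real \<Rightarrow> complex" where
  "J2 d m' m = (Jplus d m' m - Jminus d m' m) / (2 * \<i>)"

definition rho_spin :: "nat \<Rightarrow> real \<Rightarrow> real \<Rightarrow> real \<Rightarrow> complex" where
  "rho_spin d p m' m = (let j = real d / 2 in
     if m' = m then complex_of_real ((1 - p) / (1 - p ^ (d + 1)) * p powr (j - m)) else 0)"

definition spin_coh :: "nat \<Rightarrow> complex \<Rightarrow> real \<Rightarrow> complex" where
  "spin_coh d z m = (let j = real d / 2 in
     complex_of_real (sqrt (real (d choose nat \<lfloor>j + m\<rfloor>))) * z ^ nat \<lfloor>j - m\<rfloor>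
       * complex_of_real (sqrt (1 - (cmod z)\<^sup>2) ^ nat \<lfloor>j + m\<rfloor>))"

text \<open>Transport via W_j |j,m> = |j-m>: X |-> W_j X W_j^*, v |-> W_j v.\<close>
definition Wconj :: "nat \<Rightarrow> (real \<Rightarrow> real \<Rightarrow> complex) \<Rightarrow> fmat" where
  "Wconj d X = (\<lambda>r c. if r \<le> d \<and> c \<le> d
      then X (real d / 2 - real r) (real d / 2 - real c) else 0)"

definition tvec :: "nat \<Rightarrow> (real \<Rightarrow> complex) \<Rightarrow> nat \<Rightarrow> complex" where
  "tvec d v = (\<lambda>n. if n \<le> d then v (real d / 2 - real n) else 0)"

end

theory Submission
  imports Defs
begin

text \<open>
  Transported to the Fock space, the spin operators \<open>J\<^sub>+\<close>, \<open>J\<^sub>-\<close>, \<open>J\<^sub>1\<close>, \<open>J\<^sub>2\<close> and the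
  operators \<open>a\<close>, \<open>a\<^sup>*\<close>, \<open>Q\<close>, \<open>P\<close> are all tridiagonal in the number basis, and \<open>J\<^sub>+/\<surd>(2j)\<close>
  differs from \<open>a\<close> only through the factor \<open>\<surd>(1 - (n-1)/2j)\<close>, so the coefficients of the
  differences in (3), (4), (6) are \<open>O((n+1)\<^sup>2/j)\<close> while those of \<open>Q\<close>, \<open>P\<close> are \<open>O((n+1)\<^sup>2)\<close>.
  Hence all operators under the traces have diagonals of polynomial growth, which the
  geometric weights \<open>\<le> p\<^sup>n\<close> of \<open>\<rho>\<^sub>j\<^sub>,\<^sub>p\<close> sum uniformly; this gives (3)--(6), and (1) because the
  weights of \<open>\<rho>\<^sub>j\<^sub>,\<^sub>p\<close> are those of \<open>\<rho>\<^sub>0\<^sub>,\<^sub>N\<close> cut off at \<open>n \<le> 2j\<close> and renormalised.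
  For (2), the amplitudes of the spin coherent vector are square roots of binomial
  probabilities with parameter \<open>|z|\<^sup>2/2j\<close>, which converge to the Poisson amplitudes of \<open>|z)\<close>;
  since both vectors are normalised, pointwise convergence upgrades to convergence in
  \<open>\<ell>\<^sup>2\<close>, and \<open>\<parallel>|u)(u| - |v)(v|\<parallel>\<^sub>1 \<le> (\<parallel>u\<parallel> + \<parallel>v\<parallel>) \<parallel>u - v\<parallel>\<close>.
\<close>

lemma infsum_eq_sum_support:
  fixes f :: "'a \<Rightarrow> 'b::{topological_comm_monoid_add, t2_space}"
  assumes "finite F" "\<And>x. x \<notin> F \<Longrightarrow> f x = 0"
  shows "infsum f UNIV = sum f F"
  by (rule infsumI, rule has_sum_finite_neutralI) (use assms in auto)

lemma summable_power_times_geometric: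
  fixes x :: real
  assumes "0 \<le> x" "x < 1"
  shows "summable (\<lambda>n. real n ^ k * x ^ n)"
proof (rule root_test_convergence)
  have "(\<lambda>n. root n (real n) ^ k * x) \<longlonglongrightarrow> 1 ^ k * x"
    by (intro tendsto_intros LIMSEQ_root)
  moreover have "eventually (\<lambda>n. root n (real n) ^ k * x = root n (norm (real n ^ k * x ^ n))) sequentially"
    using assms by (intro eventually_sequentiallyI[of 1]) (simp add: abs_mult real_root_mult real_root_power)
  ultimately show "(\<lambda>n. root n (norm (real n ^ k * x ^ n))) \<longlonglongrightarrow> x"
    by (simp add: Lim_transform_eventually)
qed (use assms in simp)

lemma summable_shifted_power_times_geometric:
  fixes x :: real
  assumes "0 < x" "x < 1"
  shows "summable (\<lambda>n. (real n + real m) ^ k * x ^ n)"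
proof -
  have "summable (\<lambda>n. real (n + m) ^ k * x ^ (n + m))"
    using summable_power_times_geometric[of x k] assms by (subst summable_iff_shift) auto
  then have "summable (\<lambda>n. real (n + m) ^ k * x ^ (n + m) / x ^ m)"
    by (rule summable_divide)
  then show ?thesis
    using assms by (simp add: power_add)
qed

section \<open>Tridiagonal operators on the Fock space\<close>

text \<open>\<open>a n\<close> is the entry at \<open>(n - 1, n)\<close> and \<open>b m\<close> the entry at \<open>(m, m - 1)\<close>: each
  coefficient is indexed by the larger of the two number states it connects.\<close>

definition tridiag :: "(nat \<Rightarrow> complex) \<Rightarrow> (nat \<Rightarrow> complex) \<Rightarrow> fmat" where
  "tridiag a b = (\<lambda>m n. if n = Suc m then a n else if m = Suc n then b m else 0)"

lemma mmul_tridiag_diag: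
  "mmul (tridiag a b) (tridiag c e) n n = a (Suc n) * e (Suc n) + (if n = 0 then 0 else b n * c n)"
proof -
  have "mmul (tridiag a b) (tridiag c e) n n = (\<Sum>k\<in>{Suc n, n - 1}. tridiag a b n k * tridiag c e k n)"
    unfolding mmul_def by (rule infsum_eq_sum_support) (auto simp: tridiag_def)
  then show ?thesis
    by (cases n) (simp_all add: tridiag_def)
qed

lemma madd_tridiag: "madd (tridiag a b) (tridiag c e) = tridiag (\<lambda>n. a n + c n) (\<lambda>n. b n + e n)"
  by (auto simp: madd_def tridiag_def fun_eq_iff)

lemma msub_tridiag: "msub (tridiag a b) (tridiag c e) = tridiag (\<lambda>n. a n - c n) (\<lambda>n. b n - e n)"
  by (auto simp: msub_def tridiag_def fun_eq_iff)

lemma smul_tridiag: "smul x (tridiag a b) = tridiag (\<lambda>n. x * a n) (\<lambda>n. x * b n)"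
  by (auto simp: smul_def tridiag_def fun_eq_iff)

lemma adj_tridiag: "adj (tridiag a b) = tridiag (\<lambda>n. cnj (b n)) (\<lambda>n. cnj (a n))"
  by (auto simp: adj_def tridiag_def fun_eq_iff)

lemma ann_tridiag: "ann = tridiag (\<lambda>n. of_real (sqrt (real n))) (\<lambda>_. 0)"
  by (auto simp: ann_def tridiag_def fun_eq_iff)

lemma cre_tridiag: "cre = tridiag (\<lambda>_. 0) (\<lambda>n. of_real (sqrt (real n)))"
  by (simp add: cre_def ann_tridiag adj_tridiag)

lemma Qop_tridiag:
  "Qop = tridiag (\<lambda>n. of_real (sqrt (real n)) / of_real (sqrt 2)) (\<lambda>n. of_real (sqrt (real n)) / of_real (sqrt 2))"
  by (simp add: Qop_def ann_tridiag cre_tridiag madd_tridiag smul_tridiag)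

lemma Pop_tridiag:
  "Pop = tridiag (\<lambda>n. - \<i> * of_real (sqrt (real n)) / of_real (sqrt 2))
                 (\<lambda>n. \<i> * of_real (sqrt (real n)) / of_real (sqrt 2))"
  unfolding Pop_def ann_tridiag cre_tridiag msub_tridiag smul_tridiag
  by (rule arg_cong2[where f = tridiag]) (auto simp: fun_eq_iff field_simps)

text \<open>Since \<open>J\<^sub>+|j, j - n\<rangle> = \<surd>(n (2j + 1 - n)) |j, j - n + 1\<rangle>\<close>, under \<open>W\<^sub>j\<close> the raising
  operator \<open>J\<^sub>+\<close> lowers the number \<open>n\<close> like \<open>a\<close>, with \<open>spin_ladder (2j) n\<close> in place of \<open>\<surd>n\<close>.\<close>

definition spin_ladder :: "nat \<Rightarrow> nat \<Rightarrow> real" where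
  "spin_ladder d n = (if n \<le> d then sqrt (real n * (real d + 1 - real n)) else 0)"

lemma Wconj_Jplus: "Wconj d (Jplus d) = tridiag (\<lambda>n. of_real (spin_ladder d n)) (\<lambda>_. 0)"
  by (auto simp: Wconj_def Jplus_def tridiag_def spin_ladder_def fun_eq_iff Let_def; simp add: field_simps)

lemma Wconj_Jminus: "Wconj d (Jminus d) = tridiag (\<lambda>_. 0) (\<lambda>n. of_real (spin_ladder d n))"
  by (auto simp: Wconj_def Jminus_def tridiag_def spin_ladder_def fun_eq_iff Let_def; simp add: field_simps)

lemma Wconj_J1: "Wconj d (J1 d) = tridiag (\<lambda>n. of_real (spin_ladder d n) / 2) (\<lambda>n. of_real (spin_ladder d n) / 2)"
proof -
  have "Wconj d (J1 d) = smul (1 / 2) (madd (Wconj d (Jplus d)) (Wconj d (Jminus d)))"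
    by (auto simp: Wconj_def J1_def smul_def madd_def fun_eq_iff)
  then show ?thesis
    by (simp add: Wconj_Jplus Wconj_Jminus madd_tridiag smul_tridiag)
qed

lemma Wconj_J2:
  "Wconj d (J2 d) = tridiag (\<lambda>n. - \<i> * of_real (spin_ladder d n) / 2) (\<lambda>n. \<i> * of_real (spin_ladder d n) / 2)"
proof -
  have "Wconj d (J2 d) = smul (1 / (2 * \<i>)) (msub (Wconj d (Jplus d)) (Wconj d (Jminus d)))"
    by (auto simp: Wconj_def J2_def smul_def msub_def fun_eq_iff)
  then show ?thesis
    by (simp add: Wconj_Jplus Wconj_Jminus msub_tridiag smul_tridiag)
qed

definition ladder_defect :: "nat \<Rightarrow> nat \<Rightarrow> real" where
  "ladder_defect d n = sqrt (real n) - spin_ladder d n / sqrt (real d)"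

lemma sqrt_of_nat_le: "sqrt (real n) \<le> real n"
  by (rule real_le_lsqrt) (auto simp: power2_eq_square simp flip: of_nat_mult)

lemma ladder_defect_bound:
  assumes "1 \<le> d"
  shows "\<bar>ladder_defect d n\<bar> \<le> (real n + 1) ^ 2 / real d"
proof (cases "1 \<le> n \<and> n \<le> d")
  case False
  have "\<bar>ladder_defect d n\<bar> = sqrt (real n)"
    using False by (cases "n = 0") (auto simp: ladder_defect_def spin_ladder_def)
  also have "\<dots> \<le> real n"
    by (rule sqrt_of_nat_le)
  also have "real n \<le> (real n + 1) ^ 2 / real d"
  proof -
    have "real d * real n \<le> real n * real n"
      using False by (cases "n = 0") (auto intro: mult_right_mono)
    then show ?thesis
      using assms by (simp add: field_simps power2_eq_square)
  qed
  finally show ?thesis .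
next
  case True
  define x where "x = (real d + 1 - real n) / real d"
  have x: "0 \<le> x" "x \<le> 1" "1 - x = (real n - 1) / real d"
    using True assms by (auto simp: x_def field_simps)
  have "x = sqrt x * sqrt x"
    using x by simp
  also have "\<dots> \<le> sqrt x"
    using x by (intro mult_left_le) auto
  finally have defect: "\<bar>1 - sqrt x\<bar> \<le> (real n - 1) / real d"
    using x by simp
  have "spin_ladder d n / sqrt (real d) = sqrt (real n) * sqrt x"
    using True by (simp add: spin_ladder_def x_def real_sqrt_mult real_sqrt_divide)
  then have "ladder_defect d n = sqrt (real n) * (1 - sqrt x)"
    by (simp add: ladder_defect_def right_diff_distrib)
  then have "\<bar>ladder_defect d n\<bar> = sqrt (real n) * \<bar>1 - sqrt x\<bar>"
    by (simp add: abs_mult)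
  also have "\<dots> \<le> real n * ((real n - 1) / real d)"
    by (rule mult_mono[OF sqrt_of_nat_le defect]) auto
  also have "\<dots> \<le> (real n + 1) ^ 2 / real d"
    using assms by (simp add: field_simps power2_eq_square)
  finally show ?thesis .
qed

lemma ann_minus_Jplus:
  "msub ann (smul (1 / of_real (sqrt (real d))) (Wconj d (Jplus d)))
     = tridiag (\<lambda>n. of_real (ladder_defect d n)) (\<lambda>_. 0)"
  unfolding ann_tridiag Wconj_Jplus msub_tridiag smul_tridiag
  by (rule arg_cong2[where f = tridiag]) (auto simp: fun_eq_iff ladder_defect_def)

lemma cre_minus_Jminus:
  "msub cre (smul (1 / of_real (sqrt (real d))) (Wconj d (Jminus d)))
     = tridiag (\<lambda>_. 0) (\<lambda>n. of_real (ladder_defect d n))"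
  unfolding cre_tridiag Wconj_Jminus msub_tridiag smul_tridiag
  by (rule arg_cong2[where f = tridiag]) (auto simp: fun_eq_iff ladder_defect_def)

lemma quadrature_defect_coefficient:
  "of_real (sqrt (real n)) / of_real (sqrt 2) - 1 / of_real (sqrt (real d / 2)) * (of_real (spin_ladder d n) / 2)
     = (of_real (ladder_defect d n) / of_real (sqrt 2) :: complex)"
proof -
  have "sqrt (real n) / sqrt 2 - 1 / sqrt (real d / 2) * (spin_ladder d n / 2) = ladder_defect d n / sqrt 2"
    by (simp add: ladder_defect_def real_sqrt_divide field_simps)
  from arg_cong[OF this, of complex_of_real] show ?thesis
    by (simp only: of_real_diff of_real_divide of_real_mult of_real_1 of_real_numeral)
qed

lemma scaled_quadrature_defect_coefficient:
  fixes c :: complex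
  shows "c * of_real (sqrt (real n)) / of_real (sqrt 2) - 1 / of_real (sqrt (real d / 2)) * (c * of_real (spin_ladder d n) / 2)
     = c * of_real (ladder_defect d n) / of_real (sqrt 2)"
proof -
  have "c * of_real (sqrt (real n)) / of_real (sqrt 2) - 1 / of_real (sqrt (real d / 2)) * (c * of_real (spin_ladder d n) / 2)
      = c * (of_real (sqrt (real n)) / of_real (sqrt 2) - 1 / of_real (sqrt (real d / 2)) * (of_real (spin_ladder d n) / 2))"
    by (simp add: algebra_simps)
  also have "\<dots> = c * (of_real (ladder_defect d n) / of_real (sqrt 2))"
    by (simp only: quadrature_defect_coefficient)
  finally show ?thesis
    by simp
qed

lemma Qop_minus_J1:
  "msub Qop (smul (1 / of_real (sqrt (real d / 2))) (Wconj d (J1 d)))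
     = tridiag (\<lambda>n. of_real (ladder_defect d n) / of_real (sqrt 2))
               (\<lambda>n. of_real (ladder_defect d n) / of_real (sqrt 2))"
  unfolding Qop_tridiag Wconj_J1 msub_tridiag smul_tridiag quadrature_defect_coefficient ..

lemma Pop_minus_J2:
  "msub Pop (smul (1 / of_real (sqrt (real d / 2))) (Wconj d (J2 d)))
     = tridiag (\<lambda>n. - \<i> * of_real (ladder_defect d n) / of_real (sqrt 2))
               (\<lambda>n. \<i> * of_real (ladder_defect d n) / of_real (sqrt 2))"
  unfolding Pop_tridiag Wconj_J2 msub_tridiag smul_tridiag scaled_quadrature_defect_coefficient ..

definition quad_bounded :: "real \<Rightarrow> (nat \<Rightarrow> complex) \<Rightarrow> bool" where
  "quad_bounded C a \<longleftrightarrow> (\<forall>m. cmod (a m) \<le> C * (real m + 1) ^ 2)"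

lemma quad_boundedD: "quad_bounded C a \<Longrightarrow> cmod (a m) \<le> C * (real m + 1) ^ 2"
  by (simp add: quad_bounded_def)

lemma quad_bounded_zero: "0 \<le> C \<Longrightarrow> quad_bounded C (\<lambda>_. 0)"
  by (simp add: quad_bounded_def)

lemma quad_bounded_mono: "quad_bounded C a \<Longrightarrow> C \<le> C' \<Longrightarrow> quad_bounded C' a"
  unfolding quad_bounded_def by (meson mult_right_mono order_trans zero_le_power2)

lemma quad_bounded_mult: "quad_bounded C a \<Longrightarrow> cmod c \<le> 1 \<Longrightarrow> quad_bounded C (\<lambda>n. c * a n)"
  unfolding quad_bounded_def norm_mult by (meson mult_left_le_one_le norm_ge_zero order_trans)

lemma quad_bounded_divide:
  assumes "quad_bounded C a" "1 \<le> cmod s"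
  shows "quad_bounded C (\<lambda>n. a n / s)"
  unfolding quad_bounded_def
proof
  fix n
  have "cmod (a n) / cmod s \<le> cmod (a n)"
    using assms(2) by (simp add: divide_le_eq mult_le_cancel_left1)
  then show "cmod (a n / s) \<le> C * (real n + 1) ^ 2"
    using quad_boundedD[OF assms(1), of n] by (simp add: norm_divide)
qed

lemma quad_bounded_sqrt: "quad_bounded 1 (\<lambda>n. of_real (sqrt (real n)))"
  unfolding quad_bounded_def
proof
  fix n
  have "real n \<le> (real n + 1) ^ 2"
    by (simp add: power2_eq_square field_simps)
  then show "cmod (of_real (sqrt (real n))) \<le> 1 * (real n + 1) ^ 2"
    using sqrt_of_nat_le[of n] by simp
qed

lemma quad_bounded_ladder_defect: "1 \<le> d \<Longrightarrow> quad_bounded (1 / real d) (\<lambda>n. of_real (ladder_defect d n))"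
  using ladder_defect_bound by (simp add: quad_bounded_def)

lemma mmul_tridiag_diag_bound:
  assumes a: "quad_bounded \<alpha> a" and b: "quad_bounded \<alpha> b"
    and c: "quad_bounded \<beta> c" and e: "quad_bounded \<beta> e"
  shows "cmod (mmul (tridiag a b) (tridiag c e) n n) \<le> 2 * \<alpha> * \<beta> * (real n + 2) ^ 4"
proof -
  have nonneg: "0 \<le> \<alpha>" "0 \<le> \<beta>"
    using quad_boundedD[OF a, of 0] quad_boundedD[OF c, of 0] by (auto intro: order_trans[OF norm_ge_zero])
  have shift: "\<alpha> * (real n + 1) ^ 2 \<le> \<alpha> * (real n + 2) ^ 2" "\<beta> * (real n + 1) ^ 2 \<le> \<beta> * (real n + 2) ^ 2"
    using nonneg by (simp_all add: mult_left_mono power_mono)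
  have bounds: "cmod (a (Suc n)) \<le> \<alpha> * (real n + 2) ^ 2" "cmod (b n) \<le> \<alpha> * (real n + 2) ^ 2"
    "cmod (c n) \<le> \<beta> * (real n + 2) ^ 2" "cmod (e (Suc n)) \<le> \<beta> * (real n + 2) ^ 2"
    using quad_boundedD[OF a, of "Suc n"] quad_boundedD[OF b, of n] quad_boundedD[OF c, of n]
      quad_boundedD[OF e, of "Suc n"] shift
    by (simp_all add: add.commute)
  have "cmod (mmul (tridiag a b) (tridiag c e) n n) \<le> cmod (a (Suc n)) * cmod (e (Suc n)) + cmod (b n) * cmod (c n)"
    unfolding mmul_tridiag_diag by (auto intro: order_trans[OF norm_triangle_ineq] simp: norm_mult)
  also have "\<dots> \<le> \<alpha> * (real n + 2) ^ 2 * (\<beta> * (real n + 2) ^ 2) + \<alpha> * (real n + 2) ^ 2 * (\<beta> * (real n + 2) ^ 2)"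
    using bounds nonneg by (intro add_mono mult_mono) auto
  also have "\<dots> = 2 * \<alpha> * \<beta> * (real n + 2) ^ 4"
    by algebra
  finally show ?thesis .
qed

lemma jordan_tridiag_diag_bound:
  assumes "quad_bounded \<alpha> a" "quad_bounded \<alpha> b" "quad_bounded \<beta> c" "quad_bounded \<beta> e"
  shows "cmod (jordan (tridiag a b) (tridiag c e) n n) \<le> 2 * \<alpha> * \<beta> * (real n + 2) ^ 4"
proof -
  have "cmod (jordan (tridiag a b) (tridiag c e) n n)
      \<le> (cmod (mmul (tridiag a b) (tridiag c e) n n) + cmod (mmul (tridiag c e) (tridiag a b) n n)) / 2"
    unfolding jordan_def by (simp add: norm_divide divide_right_mono norm_triangle_ineq)
  also have "\<dots> \<le> (2 * \<alpha> * \<beta> * (real n + 2) ^ 4 + 2 * \<beta> * \<alpha> * (real n + 2) ^ 4) / 2"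
    using mmul_tridiag_diag_bound[OF assms] mmul_tridiag_diag_bound[OF assms(3,4,1,2)]
    by (intro divide_right_mono add_mono) auto
  finally show ?thesis
    by simp
qed

section \<open>Expectations in the spin and thermal states\<close>

lemma mmul_diagonal_left:
  assumes "\<And>m n. m \<noteq> n \<Longrightarrow> R m n = 0"
  shows "mmul R Y m n = R m m * Y m n"
proof -
  have "mmul R Y m n = (\<Sum>k\<in>{m}. R m k * Y k n)"
    unfolding mmul_def by (rule infsum_eq_sum_support) (use assms in auto)
  then show ?thesis
    by simp
qed

lemma Tr_mmul_diagonal:
  assumes "\<And>m n. m \<noteq> n \<Longrightarrow> R m n = 0"
  shows "Tr (mmul R Y) = (\<Sum>\<^sub>\<infinity>n. R n n * Y n n)"
  unfolding Tr_def using mmul_diagonal_left[OF assms] by simp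

definition spin_weight :: "nat \<Rightarrow> real \<Rightarrow> nat \<Rightarrow> real" where
  "spin_weight d p n = (1 - p) / (1 - p ^ (d + 1)) * p ^ n"

lemma Wconj_rho_spin:
  assumes "0 < p"
  shows "Wconj d (rho_spin d p) = (\<lambda>m n. if m = n \<and> m \<le> d then of_real (spin_weight d p m) else 0)"
  using assms by (auto simp: Wconj_def rho_spin_def spin_weight_def Let_def fun_eq_iff powr_realpow)

lemma Tr_rho_spin:
  assumes "0 < p"
  shows "Tr (mmul (Wconj d (rho_spin d p)) Y) = (\<Sum>n\<le>d. of_real (spin_weight d p n) * Y n n)"
proof -
  have "Tr (mmul (Wconj d (rho_spin d p)) Y) = (\<Sum>\<^sub>\<infinity>n. Wconj d (rho_spin d p) n n * Y n n)"
    by (rule Tr_mmul_diagonal) (simp add: Wconj_rho_spin[OF assms])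
  also have "\<dots> = (\<Sum>n\<le>d. Wconj d (rho_spin d p) n n * Y n n)"
    by (rule infsum_eq_sum_support) (auto simp: Wconj_rho_spin[OF assms])
  finally show ?thesis
    by (simp add: Wconj_rho_spin[OF assms])
qed

lemma rho_th_geometric:
  assumes "p < 1"
  shows "rho_th (p / (1 - p)) = (\<lambda>m n. if m = n then of_real ((1 - p) * p ^ m) else 0)"
proof -
  have "1 / (p / (1 - p) + 1) = 1 - p" "p / (1 - p) / (p / (1 - p) + 1) = p"
    using assms by (simp_all add: field_simps)
  then show ?thesis
    by (simp add: rho_th_def fun_eq_iff)
qed

lemma Tr_rho_th_geometric:
  assumes "p < 1"
  shows "Tr (mmul (rho_th (p / (1 - p))) Y) = (\<Sum>\<^sub>\<infinity>n. of_real ((1 - p) * p ^ n) * Y n n)"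
  by (subst Tr_mmul_diagonal) (simp_all add: rho_th_geometric[OF assms])

lemma spin_weight_bounds:
  assumes "0 < p" "p < 1"
  shows "0 \<le> spin_weight d p n" "spin_weight d p n \<le> p ^ n"
proof -
  have pow: "p ^ (d + 1) \<le> p"
    using assms by (simp add: power_le_one mult_left_le)
  then have pos: "0 < 1 - p ^ (d + 1)"
    using assms by linarith
  have c: "0 \<le> (1 - p) / (1 - p ^ (d + 1))" "(1 - p) / (1 - p ^ (d + 1)) \<le> 1"
    using pos pow assms unfolding pos_divide_le_eq[OF pos] by simp_all
  show "0 \<le> spin_weight d p n"
    unfolding spin_weight_def using c assms by (intro mult_nonneg_nonneg) simp_all
  show "spin_weight d p n \<le> p ^ n"
    unfolding spin_weight_def using c assms by (intro mult_left_le_one_le) simp_all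
qed

lemma Tr_rho_spin_tendsto_zero:
  assumes p: "0 < p" "p < 1"
    and bound: "\<And>d n. 1 \<le> d \<Longrightarrow> n \<le> d \<Longrightarrow> cmod (Y d n n) \<le> C * (real n + 2) ^ 4 / real d"
  shows "(\<lambda>d. Tr (mmul (Wconj d (rho_spin d p)) (Y d))) \<longlonglongrightarrow> 0"
proof (rule Lim_null_comparison)
  define S where "S = (\<Sum>n. (real n + 2) ^ 4 * p ^ n)"
  have summable: "summable (\<lambda>n. (real n + 2) ^ 4 * p ^ n)"
    using summable_shifted_power_times_geometric[OF p, of 2 4] by simp
  have "0 \<le> C * 16"
    using order_trans[OF norm_ge_zero bound[of 1 0]] by simp
  then have "0 \<le> C"
    by simp
  show "(\<lambda>d. C * S / real d) \<longlonglongrightarrow> 0"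
    by (rule lim_const_over_n)
  show "eventually (\<lambda>d. norm (Tr (mmul (Wconj d (rho_spin d p)) (Y d))) \<le> C * S / real d) sequentially"
  proof (rule eventually_sequentiallyI)
    fix d :: nat
    assume d: "1 \<le> d"
    have "norm (Tr (mmul (Wconj d (rho_spin d p)) (Y d))) \<le> (\<Sum>n\<le>d. spin_weight d p n * cmod (Y d n n))"
      unfolding Tr_rho_spin[OF p(1)]
      by (rule order_trans[OF norm_sum]) (simp add: norm_mult abs_of_nonneg spin_weight_bounds[OF p])
    also have "\<dots> \<le> (\<Sum>n\<le>d. C / real d * ((real n + 2) ^ 4 * p ^ n))"
    proof (rule sum_mono)
      fix n
      assume "n \<in> {..d}"
      then have "spin_weight d p n * cmod (Y d n n) \<le> p ^ n * (C * (real n + 2) ^ 4 / real d)"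
        using spin_weight_bounds[OF p, of d n] bound[OF d, of n] by (intro mult_mono) auto
      then show "spin_weight d p n * cmod (Y d n n) \<le> C / real d * ((real n + 2) ^ 4 * p ^ n)"
        by (simp add: field_simps)
    qed
    also have "\<dots> \<le> C / real d * S"
      unfolding S_def sum_distrib_left[symmetric] using summable p \<open>0 \<le> C\<close>
      by (intro mult_left_mono sum_le_suminf) auto
    finally show "norm (Tr (mmul (Wconj d (rho_spin d p)) (Y d))) \<le> C * S / real d"
      by simp
  qed
qed

lemma Tr_rho_spin_tendsto_Tr_rho_th:
  assumes p: "0 < p" "p < 1"
    and bound: "\<And>n. cmod (Y n n) \<le> K * (real n + 2) ^ 4"
  shows "(\<lambda>d. Tr (mmul (Wconj d (rho_spin d p)) Y)) \<longlonglongrightarrow> Tr (mmul (rho_th (p / (1 - p))) Y)"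
proof -
  define g where "g n = of_real ((1 - p) * p ^ n) * Y n n" for n
  have majorant: "summable (\<lambda>n. K * (1 - p) * ((real n + 2) ^ 4 * p ^ n))"
    using summable_shifted_power_times_geometric[OF p, of 2 4] by (simp add: summable_mult)
  have dominated: "norm (g n) \<le> K * (1 - p) * ((real n + 2) ^ 4 * p ^ n)" for n
  proof -
    have "norm (g n) = (1 - p) * p ^ n * cmod (Y n n)"
      using p unfolding g_def norm_mult norm_of_real by simp
    also have "\<dots> \<le> (1 - p) * p ^ n * (K * (real n + 2) ^ 4)"
      using p bound[of n] by (intro mult_left_mono) auto
    finally show ?thesis
      by (simp add: mult_ac)
  qed
  have summable: "summable (\<lambda>n. norm (g n))"
    using dominated by (intro summable_norm_comparison_test[OF _ majorant]) blast
  have "(\<lambda>d. 1 / (1 - p ^ Suc d)) \<longlonglongrightarrow> 1 / (1 - 0)"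
    using p by (intro tendsto_intros LIMSEQ_power_zero[THEN LIMSEQ_Suc]) auto
  then have "(\<lambda>d. of_real (1 / (1 - p ^ Suc d)) * (\<Sum>n\<le>d. g n)) \<longlonglongrightarrow> of_real (1 / (1 - 0)) * (\<Sum>n. g n)"
    by (intro tendsto_mult tendsto_of_real summable_LIMSEQ' summable_norm_cancel[OF summable])
  moreover have "Tr (mmul (Wconj d (rho_spin d p)) Y) = of_real (1 / (1 - p ^ Suc d)) * (\<Sum>n\<le>d. g n)" for d
    by (simp add: Tr_rho_spin p spin_weight_def g_def sum_distrib_left mult_ac)
  moreover have "Tr (mmul (rho_th (p / (1 - p))) Y) = (\<Sum>n. g n)"
    unfolding Tr_rho_th_geometric[OF p(2)] g_def[symmetric]
    by (rule infsumI, rule norm_summable_imp_has_sum[OF summable],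
        rule summable_sums[OF summable_norm_cancel[OF summable]])
  ultimately show ?thesis
    by simp
qed

lemma Tr_rho_spin_tridiag_tendsto_zero:
  assumes p: "0 < p" "p < 1"
    and small: "\<And>d. 1 \<le> d \<Longrightarrow> quad_bounded (1 / real d) (a d)" "\<And>d. 1 \<le> d \<Longrightarrow> quad_bounded (1 / real d) (b d)"
    and large: "\<And>d. 1 \<le> d \<Longrightarrow> quad_bounded 1 (c d)" "\<And>d. 1 \<le> d \<Longrightarrow> quad_bounded 1 (e d)"
  shows "(\<lambda>d. Tr (mmul (Wconj d (rho_spin d p)) (mmul (tridiag (a d) (b d)) (tridiag (c d) (e d))))) \<longlonglongrightarrow> 0"
    and "(\<lambda>d. Tr (mmul (Wconj d (rho_spin d p)) (jordan (tridiag (a d) (b d)) (tridiag (c d) (e d))))) \<longlonglongrightarrow> 0"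
  using mmul_tridiag_diag_bound[OF small large] jordan_tridiag_diag_bound[OF small large]
  by (auto intro!: Tr_rho_spin_tendsto_zero[OF p, where C = 2])

lemma Tr_rho_spin_tridiag_tendsto_Tr_rho_th:
  assumes p: "0 < p" "p < 1"
    and bounded: "quad_bounded 1 a" "quad_bounded 1 b" "quad_bounded 1 c" "quad_bounded 1 e"
  shows "(\<lambda>d. Tr (mmul (Wconj d (rho_spin d p)) (mmul (tridiag a b) (tridiag c e))))
           \<longlonglongrightarrow> Tr (mmul (rho_th (p / (1 - p))) (mmul (tridiag a b) (tridiag c e)))"
    and "(\<lambda>d. Tr (mmul (Wconj d (rho_spin d p)) (jordan (tridiag a b) (tridiag c e))))
           \<longlonglongrightarrow> Tr (mmul (rho_th (p / (1 - p))) (jordan (tridiag a b) (tridiag c e)))"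
  using mmul_tridiag_diag_bound[OF bounded] jordan_tridiag_diag_bound[OF bounded]
  by (auto intro!: Tr_rho_spin_tendsto_Tr_rho_th[OF p, where K = 2])

section \<open>Trace norm\<close>

definition inner_upto :: "nat \<Rightarrow> (nat \<Rightarrow> complex) \<Rightarrow> (nat \<Rightarrow> complex) \<Rightarrow> complex" where
  "inner_upto M x y = (\<Sum>n<M. cnj (x n) * y n)"

lemma inner_upto_commute: "inner_upto M y x = cnj (inner_upto M x y)"
  by (simp add: inner_upto_def mult.commute)

lemma norm_inner_upto_commute: "cmod (inner_upto M y x) = cmod (inner_upto M x y)"
  by (simp add: inner_upto_commute[of M y x])

lemma inner_upto_sum_left:
  "inner_upto M (\<lambda>n. \<Sum>k<K. c k * e k n) y = (\<Sum>k<K. cnj (c k) * inner_upto M (e k) y)"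
proof -
  have "inner_upto M (\<lambda>n. \<Sum>k<K. c k * e k n) y = (\<Sum>n<M. \<Sum>k<K. cnj (c k) * (cnj (e k n) * y n))"
    by (simp add: inner_upto_def sum_distrib_right mult.assoc)
  also have "\<dots> = (\<Sum>k<K. cnj (c k) * inner_upto M (e k) y)"
    by (subst sum.swap) (simp add: inner_upto_def sum_distrib_left)
  finally show ?thesis .
qed

lemma inner_upto_orthonormal_expansion:
  assumes "orthonormal_fin M K e" "k < K"
  shows "inner_upto M (e k) (\<lambda>n. \<Sum>l<K. c l * e l n) = c k"
proof -
  have "inner_upto M (e k) (\<lambda>n. \<Sum>l<K. c l * e l n) = (\<Sum>l<K. c l * (\<Sum>n<M. cnj (e k n) * e l n))"
    unfolding inner_upto_def sum_distrib_left by (subst sum.swap) (simp add: mult_ac)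
  also have "\<dots> = (\<Sum>l<K. if l = k then c k else 0)"
    using assms unfolding orthonormal_fin_def by (intro sum.cong) auto
  finally show ?thesis
    using assms(2) by simp
qed

lemma cnj_mult_self: "cnj w * w = of_real ((cmod w)\<^sup>2)"
  by (metis complex_norm_square mult.commute)

lemma bessel_inequality_upto:
  assumes orthonormal: "orthonormal_fin M K e"
  shows "(\<Sum>k<K. (cmod (inner_upto M (e k) x))\<^sup>2) \<le> (\<Sum>n<M. (cmod (x n))\<^sup>2)"
proof -
  define c where "c k = inner_upto M (e k) x" for k
  define s where "s n = (\<Sum>k<K. c k * e k n)" for n
  define A where "A = (\<Sum>k<K. cnj (c k) * c k)"
  have sx: "inner_upto M s x = A"
    unfolding s_def inner_upto_sum_left A_def c_def ..
  have ss: "inner_upto M s s = A"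
    unfolding s_def inner_upto_sum_left A_def
    by (intro sum.cong refl) (simp add: s_def[abs_def] inner_upto_orthonormal_expansion[OF orthonormal])
  have xs: "inner_upto M x s = A"
    using sx by (simp add: inner_upto_commute[of M x s] A_def mult.commute)
  have "inner_upto M (\<lambda>n. x n - s n) (\<lambda>n. x n - s n)
      = inner_upto M x x - inner_upto M x s - inner_upto M s x + inner_upto M s s"
    by (simp add: inner_upto_def algebra_simps sum_subtractf sum.distrib)
  also have "\<dots> = inner_upto M x x - A"
    using sx ss xs by simp
  finally have "of_real (\<Sum>n<M. (cmod (x n - s n))\<^sup>2)
      = of_real (\<Sum>n<M. (cmod (x n))\<^sup>2) - (of_real (\<Sum>k<K. (cmod (c k))\<^sup>2) :: complex)"
    unfolding inner_upto_def cnj_mult_self A_def of_real_sum .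
  then have "(\<Sum>n<M. (cmod (x n - s n))\<^sup>2) = (\<Sum>n<M. (cmod (x n))\<^sup>2) - (\<Sum>k<K. (cmod (c k))\<^sup>2)"
    by (simp only: of_real_diff[symmetric] of_real_eq_iff)
  moreover have "0 \<le> (\<Sum>n<M. (cmod (x n - s n))\<^sup>2)"
    by (simp add: sum_nonneg)
  ultimately show ?thesis
    unfolding c_def by linarith
qed

lemma cauchy_schwarz_bessel_upto:
  assumes "orthonormal_fin M K e" "orthonormal_fin M K f"
  shows "(\<Sum>k<K. cmod (inner_upto M (f k) a) * cmod (inner_upto M (e k) b))
           \<le> sqrt ((\<Sum>n<M. (cmod (a n))\<^sup>2) * (\<Sum>n<M. (cmod (b n))\<^sup>2))"
proof (rule real_le_rsqrt)
  have "(\<Sum>k<K. cmod (inner_upto M (f k) a) * cmod (inner_upto M (e k) b))\<^sup>2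
      \<le> (\<Sum>k<K. (cmod (inner_upto M (f k) a))\<^sup>2) * (\<Sum>k<K. (cmod (inner_upto M (e k) b))\<^sup>2)"
    by (rule Cauchy_Schwarz_ineq_sum)
  also have "\<dots> \<le> (\<Sum>n<M. (cmod (a n))\<^sup>2) * (\<Sum>n<M. (cmod (b n))\<^sup>2)"
    using bessel_inequality_upto[OF assms(2), of a] bessel_inequality_upto[OF assms(1), of b]
    by (intro mult_mono) (auto intro: sum_nonneg)
  finally show "(\<Sum>k<K. cmod (inner_upto M (f k) a) * cmod (inner_upto M (e k) b))\<^sup>2
      \<le> (\<Sum>n<M. (cmod (a n))\<^sup>2) * (\<Sum>n<M. (cmod (b n))\<^sup>2)" .
qed

lemma trace_norm_le:
  assumes "\<And>M K e f. orthonormal_fin M K e \<Longrightarrow> orthonormal_fin M K f \<Longrightarrow>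
     (\<Sum>k<K. cmod (\<Sum>m<M. \<Sum>n<M. cnj (f k m) * T m n * e k n)) \<le> B"
  shows "trace_norm T \<le> ereal B"
  unfolding trace_norm_def by (rule SUP_least) (auto intro: assms)

lemma trace_norm_nonneg: "0 \<le> trace_norm T"
proof -
  have "(0, 0, \<lambda>_ _. 0, \<lambda>_ _. 0) \<in> {(M, K, e, f). orthonormal_fin M K e \<and> orthonormal_fin M K f}"
    by (simp add: orthonormal_fin_def)
  then show ?thesis
    unfolding trace_norm_def by (rule SUP_upper2) (simp add: zero_ereal_def)
qed

lemma trace_norm_tendsto_zero:
  assumes "eventually (\<lambda>d. trace_norm (T d) \<le> ereal (B d)) sequentially" "B \<longlonglongrightarrow> 0"
  shows "(\<lambda>d. trace_norm (T d)) \<longlonglongrightarrow> 0"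
proof (rule tendsto_sandwich[of "\<lambda>_. 0" _ _ "\<lambda>d. ereal (B d)"])
  show "((\<lambda>d. ereal (B d)) \<longlongrightarrow> 0) sequentially"
    using assms(2) by (simp add: zero_ereal_def)
qed (use assms(1) trace_norm_nonneg in auto)

lemma trace_norm_diagonal_le:
  assumes diagonal: "\<And>m n. m \<noteq> n \<Longrightarrow> T m n = 0" and B: "\<And>M. (\<Sum>m<M. cmod (T m m)) \<le> B"
  shows "trace_norm T \<le> ereal B"
proof (rule trace_norm_le)
  fix M K e f
  assume e: "orthonormal_fin M K e" and f: "orthonormal_fin M K f"
  have column: "(\<Sum>k<K. cmod (f k m) * cmod (e k m)) \<le> 1" if "m < M" for m
  proof -
    define \<delta> :: "nat \<Rightarrow> complex" where "\<delta> n = (if n = m then 1 else 0)" for n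
    have "inner_upto M g \<delta> = cnj (g m)" for g
      using that by (simp add: inner_upto_def \<delta>_def if_distrib cong: if_cong)
    moreover have "(\<Sum>n<M. (cmod (\<delta> n))\<^sup>2) = (\<Sum>n<M. if n = m then 1 else 0)"
      by (rule sum.cong) (auto simp: \<delta>_def)
    ultimately show ?thesis
      using that cauchy_schwarz_bessel_upto[OF e f, of \<delta> \<delta>] by simp
  qed
  have row: "(\<Sum>n<M. cnj (f k m) * T m n * e k n) = cnj (f k m) * T m m * e k m" if "m < M" for k m
  proof -
    have "(\<Sum>n<M. cnj (f k m) * T m n * e k n) = (\<Sum>n<M. if n = m then cnj (f k m) * T m m * e k m else 0)"
      by (rule sum.cong) (auto simp: diagonal)
    then show ?thesis
      using that by simp
  qed
  have "(\<Sum>k<K. cmod (\<Sum>m<M. \<Sum>n<M. cnj (f k m) * T m n * e k n))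
      = (\<Sum>k<K. cmod (\<Sum>m<M. cnj (f k m) * T m m * e k m))"
    by (intro sum.cong refl arg_cong[where f = cmod]) (simp add: row)
  also have "\<dots> \<le> (\<Sum>k<K. \<Sum>m<M. cmod (T m m) * (cmod (f k m) * cmod (e k m)))"
    by (intro sum_mono order_trans[OF norm_sum]) (simp add: norm_mult mult_ac)
  also have "\<dots> = (\<Sum>m<M. cmod (T m m) * (\<Sum>k<K. cmod (f k m) * cmod (e k m)))"
    unfolding sum_distrib_left by (rule sum.swap)
  also have "\<dots> \<le> (\<Sum>m<M. cmod (T m m))"
    using column by (intro sum_mono mult_right_le_one_le) (auto intro: sum_nonneg)
  also have "\<dots> \<le> B"
    by (rule B)
  finally show "(\<Sum>k<K. cmod (\<Sum>m<M. \<Sum>n<M. cnj (f k m) * T m n * e k n)) \<le> B" .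
qed

text \<open>Writing \<open>p\<^sup>m = \<surd>p\<^sup>m \<surd>p\<^sup>m\<close>, one factor supplies the decay \<open>\<surd>p\<^sup>d\<^sup>+\<^sup>1\<close> also for the
  thermal tail \<open>m > d\<close>, where the spin weight vanishes.\<close>

lemma spin_thermal_weight_diff_bound:
  assumes p: "0 < p" "p < 1"
  shows "\<bar>(if m \<le> d then spin_weight d p m else 0) - (1 - p) * p ^ m\<bar> \<le> sqrt p ^ (d + 1) * sqrt p ^ m"
proof -
  define q where "q = sqrt p"
  have q: "0 < q" "q < 1" "p = q\<^sup>2"
    using p by (auto simp: q_def)
  have p_le_q: "p ^ k \<le> q ^ k" for k
    using q by (simp add: power_mono power2_eq_square mult_left_le_one_le)
  show ?thesis
  proof (cases "m \<le> d")
    case True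
    have pos: "0 < 1 - p ^ (d + 1)"
      using power_Suc_less_one[OF p, of d] by simp
    have "\<bar>spin_weight d p m - (1 - p) * p ^ m\<bar> = (1 - p) / (1 - p ^ (d + 1)) * (p ^ m * p ^ (d + 1))"
      using pos p by (simp add: spin_weight_def field_simps)
    also have "\<dots> \<le> p ^ m * p ^ (d + 1)"
      using spin_weight_bounds[OF p, of d 0] p by (intro mult_left_le_one_le) (simp_all add: spin_weight_def)
    also have "\<dots> \<le> q ^ (d + 1) * q ^ m"
      using mult_mono[OF p_le_q[of m] p_le_q[of "d + 1"]] p q by (simp add: mult.commute)
    finally show ?thesis
      using True by (simp add: q_def)
  next
    case False
    have "\<bar>(if m \<le> d then spin_weight d p m else 0) - (1 - p) * p ^ m\<bar> \<le> p ^ m"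
      using False p by (simp add: mult_left_le_one_le)
    also have "\<dots> = q ^ m * q ^ m"
      using q by (simp add: power_mult_distrib[symmetric] power2_eq_square power_mult[symmetric] mult.commute)
    also have "\<dots> \<le> q ^ (d + 1) * q ^ m"
      using False q by (intro mult_right_mono power_decreasing) auto
    finally show ?thesis
      by (simp add: q_def)
  qed
qed

lemma rho_spin_trace_norm_tendsto:
  assumes p: "0 < p" "p < 1"
  shows "(\<lambda>d. trace_norm (msub (Wconj d (rho_spin d p)) (rho_th (p / (1 - p))))) \<longlonglongrightarrow> 0"
proof (rule trace_norm_tendsto_zero)
  define q where "q = sqrt p"
  have q: "0 < q" "q < 1"
    using p by (auto simp: q_def)
  have diff: "msub (Wconj d (rho_spin d p)) (rho_th (p / (1 - p)))
      = (\<lambda>m n. if m = n then of_real ((if m \<le> d then spin_weight d p m else 0) - (1 - p) * p ^ m) else 0)" for d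
    by (auto simp: msub_def Wconj_rho_spin[OF p(1)] rho_th_geometric[OF p(2)] fun_eq_iff)
  show "eventually (\<lambda>d. trace_norm (msub (Wconj d (rho_spin d p)) (rho_th (p / (1 - p))))
      \<le> ereal (q ^ (d + 1) / (1 - q))) sequentially"
  proof (intro always_eventually allI trace_norm_diagonal_le)
    fix d M :: nat
    have "cmod (msub (Wconj d (rho_spin d p)) (rho_th (p / (1 - p))) m m) \<le> q ^ (d + 1) * q ^ m" for m
      using spin_thermal_weight_diff_bound[OF p, of m d] by (simp only: diff if_P[OF refl] norm_of_real q_def)
    then have "(\<Sum>m<M. cmod (msub (Wconj d (rho_spin d p)) (rho_th (p / (1 - p))) m m)) \<le> (\<Sum>m<M. q ^ (d + 1) * q ^ m)"
      by (intro sum_mono)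
    also have "\<dots> = q ^ (d + 1) * ((1 - q ^ M) / (1 - q))"
      using q by (simp add: sum_distrib_left[symmetric] sum_gp_strict)
    also have "\<dots> \<le> q ^ (d + 1) / (1 - q)"
      using q by (simp add: divide_right_mono mult_left_le_one_le)
    finally show "(\<Sum>m<M. cmod (msub (Wconj d (rho_spin d p)) (rho_th (p / (1 - p))) m m)) \<le> q ^ (d + 1) / (1 - q)" .
  qed (simp add: diff)
  show "(\<lambda>d. q ^ (d + 1) / (1 - q)) \<longlonglongrightarrow> 0"
    using LIMSEQ_power_zero[of q] q by (intro tendsto_divide_zero LIMSEQ_Suc) auto
qed

section \<open>Coherent states\<close>

lemma norm_diff_squared_le: "(cmod (x - y))\<^sup>2 \<le> 2 * (cmod x)\<^sup>2 + 2 * (cmod y)\<^sup>2"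
proof -
  have "(cmod (x - y))\<^sup>2 \<le> (cmod x + cmod y)\<^sup>2"
    by (intro power_mono norm_triangle_ineq4) auto
  also have "\<dots> \<le> 2 * (cmod x)\<^sup>2 + 2 * (cmod y)\<^sup>2"
    using sum_squares_ge_zero[of "cmod x - cmod y" 0] by (simp add: power2_eq_square algebra_simps)
  finally show ?thesis .
qed

lemma summable_norm_diff_squared:
  assumes "summable (\<lambda>n. (cmod (u n))\<^sup>2)" "summable (\<lambda>n. (cmod (v n))\<^sup>2)"
  shows "summable (\<lambda>n. (cmod (u n - v n))\<^sup>2)"
  using summable_add[OF summable_mult[OF assms(1), of 2] summable_mult[OF assms(2), of 2]]
  by (rule summable_comparison_test'[where N = 0]) (simp add: norm_diff_squared_le)

lemma trace_norm_proj_diff_le: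
  assumes su: "summable (\<lambda>n. (cmod (u n))\<^sup>2)" and sv: "summable (\<lambda>n. (cmod (v n))\<^sup>2)"
  shows "trace_norm (msub (proj u) (proj v))
           \<le> ereal (sqrt ((\<Sum>n. (cmod (u n - v n))\<^sup>2) * (\<Sum>n. (cmod (u n))\<^sup>2))
                  + sqrt ((\<Sum>n. (cmod (v n))\<^sup>2) * (\<Sum>n. (cmod (u n - v n))\<^sup>2)))"
proof (rule trace_norm_le)
  fix M K e f
  assume e: "orthonormal_fin M K e" and f: "orthonormal_fin M K f"
  define w where "w n = u n - v n" for n
  have sw: "summable (\<lambda>n. (cmod (w n))\<^sup>2)"
    unfolding w_def by (rule summable_norm_diff_squared[OF su sv])
  have partial: "(\<Sum>n<M. (cmod (x n))\<^sup>2) \<le> (\<Sum>n. (cmod (x n))\<^sup>2)" if "summable (\<lambda>n. (cmod (x n))\<^sup>2)" for x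
    by (rule sum_le_suminf[OF that]) auto
  have nonneg: "0 \<le> (\<Sum>n. (cmod (x n))\<^sup>2)" if "summable (\<lambda>n. (cmod (x n))\<^sup>2)" for x
    by (rule suminf_nonneg[OF that]) simp
  have expansion: "(\<Sum>m<M. \<Sum>n<M. cnj (f k m) * msub (proj u) (proj v) m n * e k n)
      = inner_upto M (f k) w * inner_upto M u (e k) + inner_upto M (f k) v * inner_upto M w (e k)" for k
  proof -
    have "msub (proj u) (proj v) m n = w m * cnj (u n) + v m * cnj (w n)" for m n
      by (simp add: msub_def proj_def w_def algebra_simps)
    then show ?thesis
      unfolding inner_upto_def sum_product sum.distrib[symmetric] by (intro sum.cong refl) (simp add: algebra_simps)
  qed
  have "(\<Sum>k<K. cmod (\<Sum>m<M. \<Sum>n<M. cnj (f k m) * msub (proj u) (proj v) m n * e k n))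
      \<le> (\<Sum>k<K. cmod (inner_upto M (f k) w) * cmod (inner_upto M (e k) u))
        + (\<Sum>k<K. cmod (inner_upto M (f k) v) * cmod (inner_upto M (e k) w))"
    unfolding expansion sum.distrib[symmetric]
    by (intro sum_mono order_trans[OF norm_triangle_ineq]) (simp add: norm_mult norm_inner_upto_commute)
  also have "\<dots> \<le> sqrt ((\<Sum>n<M. (cmod (w n))\<^sup>2) * (\<Sum>n<M. (cmod (u n))\<^sup>2))
      + sqrt ((\<Sum>n<M. (cmod (v n))\<^sup>2) * (\<Sum>n<M. (cmod (w n))\<^sup>2))"
    by (intro add_mono cauchy_schwarz_bessel_upto[OF e f])
  also have "\<dots> \<le> sqrt ((\<Sum>n. (cmod (w n))\<^sup>2) * (\<Sum>n. (cmod (u n))\<^sup>2))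
      + sqrt ((\<Sum>n. (cmod (v n))\<^sup>2) * (\<Sum>n. (cmod (w n))\<^sup>2))"
    using partial[OF sw] partial[OF su] partial[OF sv] nonneg[OF sw] nonneg[OF sv]
    by (intro add_mono real_sqrt_le_mono mult_mono) (auto intro: sum_nonneg)
  finally show "(\<Sum>k<K. cmod (\<Sum>m<M. \<Sum>n<M. cnj (f k m) * msub (proj u) (proj v) m n * e k n))
      \<le> sqrt ((\<Sum>n. (cmod (u n - v n))\<^sup>2) * (\<Sum>n. (cmod (u n))\<^sup>2))
        + sqrt ((\<Sum>n. (cmod (v n))\<^sup>2) * (\<Sum>n. (cmod (u n - v n))\<^sup>2))"
    by (simp add: w_def)
qed

lemma suminf_norm_diff_squared_split:
  assumes su: "summable (\<lambda>n. (cmod (u n))\<^sup>2)" and sv: "summable (\<lambda>n. (cmod (v n))\<^sup>2)"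
  shows "(\<Sum>n. (cmod (u n - v n))\<^sup>2) \<le> (\<Sum>n<N. (cmod (u n - v n))\<^sup>2)
           + 2 * ((\<Sum>n. (cmod (u n))\<^sup>2) - (\<Sum>n<N. (cmod (u n))\<^sup>2))
           + 2 * ((\<Sum>n. (cmod (v n))\<^sup>2) - (\<Sum>n<N. (cmod (v n))\<^sup>2))"
proof -
  have tail: "(\<Sum>n. (cmod (x (n + N)))\<^sup>2) = (\<Sum>n. (cmod (x n))\<^sup>2) - (\<Sum>n<N. (cmod (x n))\<^sup>2)"
    if "summable (\<lambda>n. (cmod (x n))\<^sup>2)" for x
    using suminf_split_initial_segment[OF that, of N] by simp
  have su': "summable (\<lambda>n. (cmod (u (n + N)))\<^sup>2)" and sv': "summable (\<lambda>n. (cmod (v (n + N)))\<^sup>2)"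
    by (rule summable_ignore_initial_segment[OF su], rule summable_ignore_initial_segment[OF sv])
  have "(\<Sum>n. (cmod (u (n + N) - v (n + N)))\<^sup>2) \<le> (\<Sum>n. 2 * (cmod (u (n + N)))\<^sup>2 + 2 * (cmod (v (n + N)))\<^sup>2)"
    using summable_norm_diff_squared[OF su' sv'] su' sv'
    by (intro suminf_le norm_diff_squared_le summable_add summable_mult)
  also have "\<dots> = 2 * (\<Sum>n. (cmod (u (n + N)))\<^sup>2) + 2 * (\<Sum>n. (cmod (v (n + N)))\<^sup>2)"
    using su' sv' by (simp add: suminf_add[symmetric] suminf_mult summable_mult)
  finally show ?thesis
    using tail[OF summable_norm_diff_squared[OF su sv]] tail[OF su] tail[OF sv] by simp
qed

text \<open>A Scheffe-type argument: as \<open>\<parallel>u\<^sub>d\<parallel> \<le> 1 = \<parallel>v\<parallel>\<close>, pointwise convergence on a finite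
  window carrying almost all of the mass of \<open>v\<close> forces the mass of \<open>u\<^sub>d\<close> outside it to vanish.\<close>

lemma l2_tendsto_of_pointwise_tendsto:
  fixes u :: "nat \<Rightarrow> nat \<Rightarrow> complex" and v :: "nat \<Rightarrow> complex"
  assumes pointwise: "\<And>n. (\<lambda>d. u d n) \<longlonglongrightarrow> v n"
    and su: "\<And>d. summable (\<lambda>n. (cmod (u d n))\<^sup>2)"
    and norm_u: "eventually (\<lambda>d. (\<Sum>n. (cmod (u d n))\<^sup>2) \<le> 1) sequentially"
    and norm_v: "(\<lambda>n. (cmod (v n))\<^sup>2) sums 1"
  shows "(\<lambda>d. \<Sum>n. (cmod (u d n - v n))\<^sup>2) \<longlonglongrightarrow> 0"
proof (rule order_tendstoI)
  fix a :: real
  assume "a < 0"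
  have "0 \<le> (\<Sum>n. (cmod (u d n - v n))\<^sup>2)" for d
    by (rule suminf_nonneg[OF summable_norm_diff_squared[OF su sums_summable[OF norm_v]]]) simp
  with \<open>a < 0\<close> show "eventually (\<lambda>d. a < (\<Sum>n. (cmod (u d n - v n))\<^sup>2)) sequentially"
    by (auto intro: always_eventually less_le_trans)
next
  fix \<epsilon> :: real
  assume "0 < \<epsilon>"
  have "(\<lambda>N. \<Sum>n<N. (cmod (v n))\<^sup>2) \<longlonglongrightarrow> 1"
    using norm_v by (simp add: sums_def)
  then have "eventually (\<lambda>N. 1 - \<epsilon> / 8 < (\<Sum>n<N. (cmod (v n))\<^sup>2)) sequentially"
    using \<open>0 < \<epsilon>\<close> by (intro order_tendstoD) auto
  then obtain N where N: "1 - \<epsilon> / 8 < (\<Sum>n<N. (cmod (v n))\<^sup>2)"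
    by (auto simp: eventually_sequentially)
  define R where "R d = (\<Sum>n<N. (cmod (u d n - v n))\<^sup>2) + 2 * (1 - (\<Sum>n<N. (cmod (u d n))\<^sup>2))
      + 2 * (1 - (\<Sum>n<N. (cmod (v n))\<^sup>2))" for d
  have limit: "R \<longlonglongrightarrow> (\<Sum>n<N. (cmod (v n - v n))\<^sup>2) + 2 * (1 - (\<Sum>n<N. (cmod (v n))\<^sup>2))
      + 2 * (1 - (\<Sum>n<N. (cmod (v n))\<^sup>2))"
    unfolding R_def by (intro tendsto_intros pointwise)
  have "eventually (\<lambda>d. R d < \<epsilon>) sequentially"
    by (rule order_tendstoD(2)[OF limit]) (use N \<open>0 < \<epsilon>\<close> in simp)
  moreover have "eventually (\<lambda>d. (\<Sum>n. (cmod (u d n - v n))\<^sup>2) \<le> R d) sequentially"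
    using norm_u
  proof eventually_elim
    case (elim d)
    then show ?case
      using suminf_norm_diff_squared_split[OF su sums_summable[OF norm_v], of d N] norm_v
      by (simp add: R_def sums_iff)
  qed
  ultimately show "eventually (\<lambda>d. (\<Sum>n. (cmod (u d n - v n))\<^sup>2) < \<epsilon>) sequentially"
    by eventually_elim simp
qed

definition fock_spin_coh :: "nat \<Rightarrow> complex \<Rightarrow> nat \<Rightarrow> complex" where
  "fock_spin_coh d z = tvec d (spin_coh d (z / of_real (sqrt (real d))))"

lemma fock_spin_coh_eq:
  assumes "n \<le> d"
  shows "fock_spin_coh d z n
           = of_real (sqrt (real (d choose n) / real d ^ n) * sqrt (1 - (cmod z)\<^sup>2 / real d) ^ (d - n)) * z ^ n"
proof -
  have "real d / 2 + (real d / 2 - real n) = real (d - n)" "real d / 2 - (real d / 2 - real n) = real n"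
    using assms by (simp_all add: of_nat_diff)
  moreover have "nat \<lfloor>real (d - n)\<rfloor> = d - n"
    by (simp only: floor_of_nat nat_int)
  moreover have "d choose (d - n) = d choose n"
    using binomial_symmetric[OF assms] by simp
  ultimately show ?thesis
    using assms
    by (simp add: fock_spin_coh_def tvec_def spin_coh_def Let_def norm_divide power_divide
        real_sqrt_divide real_sqrt_power)
qed

lemma norm_fock_spin_coh_squared:
  assumes "n \<le> d" "(cmod z)\<^sup>2 \<le> real d"
  shows "(cmod (fock_spin_coh d z n))\<^sup>2
           = real (d choose n) * ((cmod z)\<^sup>2 / real d) ^ n * (1 - (cmod z)\<^sup>2 / real d) ^ (d - n)"
proof -
  define r where "r = real (d choose n) / real d ^ n"
  define x where "x = 1 - (cmod z)\<^sup>2 / real d"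
  have "0 \<le> r"
    by (simp add: r_def)
  have "0 \<le> x"
    using assms(2) by (cases "d = 0") (simp_all add: x_def divide_le_eq_1)
  have "cmod (fock_spin_coh d z n) = sqrt r * sqrt x ^ (d - n) * cmod z ^ n"
    unfolding fock_spin_coh_eq[OF assms(1)] r_def[symmetric] x_def[symmetric]
    using \<open>0 \<le> r\<close> \<open>0 \<le> x\<close> by (simp add: norm_mult norm_power abs_mult)
  then have "(cmod (fock_spin_coh d z n))\<^sup>2 = (sqrt r)\<^sup>2 * ((sqrt x)\<^sup>2) ^ (d - n) * ((cmod z)\<^sup>2) ^ n"
    by (simp add: power_mult_distrib power_mult[symmetric] mult.commute)
  also have "\<dots> = real (d choose n) * ((cmod z)\<^sup>2 / real d) ^ n * x ^ (d - n)"
    using \<open>0 \<le> r\<close> \<open>0 \<le> x\<close> by (simp add: r_def power_divide)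
  finally show ?thesis
    by (simp add: x_def)
qed

lemma summable_norm_tvec_squared: "summable (\<lambda>n. (cmod (tvec d v n))\<^sup>2)"
  by (rule summable_finite[of "{..d}"]) (auto simp: tvec_def)

lemma suminf_norm_fock_spin_coh_squared:
  assumes "(cmod z)\<^sup>2 \<le> real d"
  shows "(\<Sum>n. (cmod (fock_spin_coh d z n))\<^sup>2) = 1"
proof -
  have "(\<Sum>n. (cmod (fock_spin_coh d z n))\<^sup>2) = (\<Sum>n\<le>d. (cmod (fock_spin_coh d z n))\<^sup>2)"
    by (rule suminf_finite) (auto simp: fock_spin_coh_def tvec_def)
  also have "\<dots> = (\<Sum>n\<le>d. real (d choose n) * ((cmod z)\<^sup>2 / real d) ^ n * (1 - (cmod z)\<^sup>2 / real d) ^ (d - n))"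
    using assms by (intro sum.cong) (auto simp: norm_fock_spin_coh_squared)
  also have "\<dots> = ((cmod z)\<^sup>2 / real d + (1 - (cmod z)\<^sup>2 / real d)) ^ d"
    by (rule binomial_ring[symmetric])
  finally show ?thesis
    by simp
qed

lemma norm_coh_squared: "(cmod (coh z n))\<^sup>2 = exp (- (cmod z)\<^sup>2) * ((cmod z)\<^sup>2) ^ n / fact n"
proof -
  have "(cmod (coh z n))\<^sup>2 = (exp (- (cmod z)\<^sup>2 / 2))\<^sup>2 * ((cmod z)\<^sup>2) ^ n / (sqrt (fact n))\<^sup>2"
    by (simp add: coh_def norm_mult norm_divide norm_power power_divide power_mult_distrib
        power_mult[symmetric] mult.commute)
  also have "(exp (- (cmod z)\<^sup>2 / 2))\<^sup>2 = exp (- (cmod z)\<^sup>2)"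
    by (simp add: power2_eq_square flip: exp_add)
  finally show ?thesis
    by simp
qed

lemma sums_norm_coh_squared: "(\<lambda>n. (cmod (coh z n))\<^sup>2) sums 1"
proof -
  have "(\<lambda>n. exp (- (cmod z)\<^sup>2) * (((cmod z)\<^sup>2) ^ n /\<^sub>R fact n)) sums (exp (- (cmod z)\<^sup>2) * exp ((cmod z)\<^sup>2))"
    by (intro sums_mult exp_converges)
  then show ?thesis
    unfolding norm_coh_squared by (simp add: divide_inverse mult_ac flip: exp_add)
qed

lemma binomial_div_power_tendsto: "(\<lambda>d. real (d choose n) / real d ^ n) \<longlonglongrightarrow> 1 / fact n"
proof (rule Lim_transform_eventually)
  have "(\<lambda>d. (\<Prod>i<n. 1 - real i / real d) / fact n) \<longlonglongrightarrow> (\<Prod>i<n. 1 - 0) / fact n"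
    by (intro tendsto_intros) auto
  then show "(\<lambda>d. (\<Prod>i<n. 1 - real i / real d) / fact n) \<longlonglongrightarrow> 1 / fact n"
    by simp
  show "eventually (\<lambda>d. (\<Prod>i<n. 1 - real i / real d) / fact n = real (d choose n) / real d ^ n) sequentially"
  proof (rule eventually_sequentiallyI)
    fix d :: nat
    assume "1 \<le> d"
    then have "(\<Prod>i<n. 1 - real i / real d) = (\<Prod>i<n. (real d - real i) / real d)"
      by (intro prod.cong) (simp_all add: diff_divide_distrib)
    also have "\<dots> = (\<Prod>i<n. real d - real i) / real d ^ n"
      by (simp add: prod_dividef)
    finally have "(\<Prod>i<n. 1 - real i / real d) = (\<Prod>i<n. real d - real i) / real d ^ n" .
    moreover have "real (d choose n) = (\<Prod>i<n. real d - real i) / fact n"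
      by (simp add: binomial_gbinomial gbinomial_prod_rev atLeast0LessThan)
    ultimately show "(\<Prod>i<n. 1 - real i / real d) / fact n = real (d choose n) / real d ^ n"
      by simp
  qed
qed

lemma one_minus_div_power_tendsto_exp: "(\<lambda>d. (1 - a / real d) ^ (d - n)) \<longlonglongrightarrow> exp (- a)"
proof (rule Lim_transform_eventually)
  have "(\<lambda>d. (1 + (- a) / real d) ^ d / (1 - a / real d) ^ n) \<longlonglongrightarrow> exp (- a) / (1 - 0) ^ n"
    by (intro tendsto_intros tendsto_exp_limit_sequentially) auto
  then show "(\<lambda>d. (1 + (- a) / real d) ^ d / (1 - a / real d) ^ n) \<longlonglongrightarrow> exp (- a)"
    by simp
  obtain D :: nat where D: "\<bar>a\<bar> < real D"
    using reals_Archimedean2 by blast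
  show "eventually (\<lambda>d. (1 + (- a) / real d) ^ d / (1 - a / real d) ^ n = (1 - a / real d) ^ (d - n)) sequentially"
  proof (rule eventually_sequentiallyI)
    fix d
    assume "max D n \<le> d"
    then have "1 - a / real d \<noteq> 0" "n \<le> d"
      using D by (auto simp: field_simps)
    then show "(1 + (- a) / real d) ^ d / (1 - a / real d) ^ n = (1 - a / real d) ^ (d - n)"
      by (simp add: power_diff)
  qed
qed

lemma fock_spin_coh_tendsto_coh: "(\<lambda>d. fock_spin_coh d z n) \<longlonglongrightarrow> coh z n"
proof (rule Lim_transform_eventually)
  define a where "a = (cmod z)\<^sup>2"
  have "exp (- a / 2) = sqrt (exp (- a))"
    by (rule real_sqrt_unique[symmetric]) (simp_all add: power2_eq_square flip: exp_add)
  then have coh: "coh z n = of_real (sqrt (1 / fact n) * sqrt (exp (- a))) * z ^ n"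
    by (simp add: coh_def a_def real_sqrt_divide)
  have "(\<lambda>d. sqrt (real (d choose n) / real d ^ n) * sqrt ((1 - a / real d) ^ (d - n)))
      \<longlonglongrightarrow> sqrt (1 / fact n) * sqrt (exp (- a))"
    by (intro tendsto_intros binomial_div_power_tendsto one_minus_div_power_tendsto_exp)
  then show "(\<lambda>d. of_real (sqrt (real (d choose n) / real d ^ n) * sqrt ((1 - a / real d) ^ (d - n))) * z ^ n)
      \<longlonglongrightarrow> coh z n"
    unfolding coh by (rule tendsto_mult_right[OF tendsto_of_real])
  show "eventually (\<lambda>d. of_real (sqrt (real (d choose n) / real d ^ n) * sqrt ((1 - a / real d) ^ (d - n))) * z ^ n
      = fock_spin_coh d z n) sequentially"
    by (rule eventually_sequentiallyI[of n]) (simp add: fock_spin_coh_eq a_def real_sqrt_power)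
qed

lemma fock_spin_coh_proj_trace_norm_tendsto:
  "(\<lambda>d. trace_norm (msub (proj (fock_spin_coh d z)) (proj (coh z)))) \<longlonglongrightarrow> 0"
proof (rule trace_norm_tendsto_zero)
  define u where "u d = fock_spin_coh d z" for d
  have su: "summable (\<lambda>n. (cmod (u d n))\<^sup>2)" for d
    unfolding u_def fock_spin_coh_def by (rule summable_norm_tvec_squared)
  have sv: "summable (\<lambda>n. (cmod (coh z n))\<^sup>2)"
    using sums_norm_coh_squared by (rule sums_summable)
  have norm_u: "eventually (\<lambda>d. (\<Sum>n. (cmod (u d n))\<^sup>2) = 1) sequentially"
  proof -
    obtain D :: nat where "(cmod z)\<^sup>2 \<le> real D"
      using real_arch_simple by blast
    then show ?thesis
      unfolding u_def by (intro eventually_sequentiallyI[of D] suminf_norm_fock_spin_coh_squared) auto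
  qed
  have "(\<lambda>d. \<Sum>n. (cmod (u d n - coh z n))\<^sup>2) \<longlonglongrightarrow> 0"
    using norm_u
    by (intro l2_tendsto_of_pointwise_tendsto[OF _ su _ sums_norm_coh_squared])
      (auto simp: u_def fock_spin_coh_tendsto_coh elim: eventually_mono)
  moreover have "(\<lambda>d. \<Sum>n. (cmod (u d n))\<^sup>2) \<longlonglongrightarrow> 1"
    using norm_u by (rule tendsto_eventually)
  ultimately have "(\<lambda>d. sqrt ((\<Sum>n. (cmod (u d n - coh z n))\<^sup>2) * (\<Sum>n. (cmod (u d n))\<^sup>2))
      + sqrt ((\<Sum>n. (cmod (coh z n))\<^sup>2) * (\<Sum>n. (cmod (u d n - coh z n))\<^sup>2))) \<longlonglongrightarrow> sqrt (0 * 1) + sqrt (1 * 0)"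
    using sums_norm_coh_squared by (intro tendsto_intros) (simp_all add: sums_iff)
  then show "(\<lambda>d. sqrt ((\<Sum>n. (cmod (u d n - coh z n))\<^sup>2) * (\<Sum>n. (cmod (u d n))\<^sup>2))
      + sqrt ((\<Sum>n. (cmod (coh z n))\<^sup>2) * (\<Sum>n. (cmod (u d n - coh z n))\<^sup>2))) \<longlonglongrightarrow> 0"
    by simp
  show "eventually (\<lambda>d. trace_norm (msub (proj (fock_spin_coh d z)) (proj (coh z)))
      \<le> ereal (sqrt ((\<Sum>n. (cmod (u d n - coh z n))\<^sup>2) * (\<Sum>n. (cmod (u d n))\<^sup>2))
        + sqrt ((\<Sum>n. (cmod (coh z n))\<^sup>2) * (\<Sum>n. (cmod (u d n - coh z n))\<^sup>2)))) sequentially"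
    unfolding u_def using trace_norm_proj_diff_le[OF su[unfolded u_def] sv] by simp
qed

theorem mainTheorem6:
  fixes p :: real and z :: complex
  assumes "0 < p" and "p < 1"
  shows
   "(\<lambda>d. trace_norm (msub (Wconj d (rho_spin d p)) (rho_th (p / (1 - p))))) \<longlonglongrightarrow> 0
  \<and> (\<lambda>d. trace_norm (msub (proj (tvec d (spin_coh d (z / complex_of_real (sqrt (real d))))))
                       (proj (coh z)))) \<longlonglongrightarrow> 0
  \<and> (\<lambda>d. Tr (mmul (Wconj d (rho_spin d p))
        (mmul (adj (msub ann (smul (1 / complex_of_real (sqrt (real d))) (Wconj d (Jplus d)))))
              (msub ann (smul (1 / complex_of_real (sqrt (real d))) (Wconj d (Jplus d))))))) \<longlonglongrightarrow> 0
  \<and> (\<lambda>d. Tr (mmul (Wconj d (rho_spin d p))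
        (mmul (adj (msub cre (smul (1 / complex_of_real (sqrt (real d))) (Wconj d (Jminus d)))))
              (msub cre (smul (1 / complex_of_real (sqrt (real d))) (Wconj d (Jminus d))))))) \<longlonglongrightarrow> 0
  \<and> (\<lambda>d. Tr (mmul (Wconj d (rho_spin d p))
        (mmul (msub Qop (smul (1 / complex_of_real (sqrt (real d / 2))) (Wconj d (J1 d))))
              (msub Qop (smul (1 / complex_of_real (sqrt (real d / 2))) (Wconj d (J1 d))))))) \<longlonglongrightarrow> 0
  \<and> (\<lambda>d. Tr (mmul (Wconj d (rho_spin d p))
        (mmul (msub Pop (smul (1 / complex_of_real (sqrt (real d / 2))) (Wconj d (J2 d))))
              (msub Pop (smul (1 / complex_of_real (sqrt (real d / 2))) (Wconj d (J2 d))))))) \<longlonglongrightarrow> 0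
  \<and> (\<lambda>d. Tr (mmul (Wconj d (rho_spin d p)) (mmul Qop Qop)))
        \<longlonglongrightarrow> Tr (mmul (rho_th (p / (1 - p))) (mmul Qop Qop))
  \<and> (\<lambda>d. Tr (mmul (Wconj d (rho_spin d p)) (mmul Pop Pop)))
        \<longlonglongrightarrow> Tr (mmul (rho_th (p / (1 - p))) (mmul Pop Pop))
  \<and> (\<lambda>d. Tr (mmul (Wconj d (rho_spin d p)) (jordan Qop Pop)))
        \<longlonglongrightarrow> Tr (mmul (rho_th (p / (1 - p))) (jordan Qop Pop))
  \<and> (\<forall>Y \<in> {Qop, Pop}.
        (\<lambda>d. Tr (mmul (Wconj d (rho_spin d p))
           (jordan (msub Qop (smul (1 / complex_of_real (sqrt (real d / 2))) (Wconj d (J1 d)))) Y)))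
          \<longlonglongrightarrow> 0
      \<and> (\<lambda>d. Tr (mmul (Wconj d (rho_spin d p))
           (jordan (msub Pop (smul (1 / complex_of_real (sqrt (real d / 2))) (Wconj d (J2 d)))) Y)))
          \<longlonglongrightarrow> 0)"
proof -
  have large_defect: "quad_bounded 1 (\<lambda>n. of_real (ladder_defect d n))" if "1 \<le> d" for d
    by (rule quad_bounded_mono[OF quad_bounded_ladder_defect[OF that]]) (use that in simp)
  note bounded = quad_bounded_zero quad_bounded_mult quad_bounded_divide quad_bounded_sqrt
    quad_bounded_ladder_defect large_defect
  show ?thesis
    unfolding ann_minus_Jplus cre_minus_Jminus Qop_minus_J1 Pop_minus_J2
    \<comment> \<open>only now, since \<open>Qop\<close> and \<open>Pop\<close> occur inside the differences just rewritten\<close>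
    unfolding Qop_tridiag Pop_tridiag adj_tridiag complex_cnj_zero complex_cnj_complex_of_real ball_simps
    using rho_spin_trace_norm_tendsto[OF assms] fock_spin_coh_proj_trace_norm_tendsto[of z, unfolded fock_spin_coh_def]
    by (intro conjI Tr_rho_spin_tridiag_tendsto_zero[OF assms] Tr_rho_spin_tridiag_tendsto_Tr_rho_th[OF assms] bounded; simp)
qed

end
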